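(* Let $v\in T_1^\circ$ be a term of size $p$, let $\vec t=(t_1,\dots,t_p)$ be a sequence of terms of $T_1^*$, and let $t=v[\vec t]$. Then for every $\gamma\in B_\bullet$, $$t(\gamma)=t_1(\gamma)\cdot\partial t_2(\gamma)\cdot\ \cdots\ \cdot\partial^{p-1}t_p(\gamma)\cdot v(1).$$
   Context: $T_1^*$ (resp. $T_1^\circ$) is the set of terms in the single variable $x$ built using a binary operator $*$ (resp. $\circ$); the size of a term is its number of variable occurrences. $v[\vec t]$ is the term obtained from $v$ by substituting $t_1,\dots,t_p$ for the variable occurrences of $v$ enumerated from left to right. For a term $t$ and $\gamma\in B_\bullet$, $t(\gamma)$ is the evaluation of $t$ at $\gamma$ in $(B_\bullet,*,\circ)$, and $v(1)$ is the evaluation at the identity $1$. The group $B_\bullet$ is generated by $\sigma_1,\sigma_2,\dots$ and $a_1,a_2,\dots$ subject to: $\sigma_j\sigma_i=\sigma_i\sigma_j$ and $a_j\sigma_i=\sigma_ia_j$ for $j\ge i+2$; $a_j\sigma_i=\sigma_{i+1}a_j$ and $a_ja_i=a_{i+1}a_j$ for $j\le i-1$; $\sigma_j\sigma_i\sigma_j=\sigma_i\sigma_j\sigma_i$, $\sigma_i\sigma_ja_i=a_j\sigma_i$ and $\sigma_j\sigma_ia_j=a_i\sigma_i$ for $j=i+1$. $\partial$ is the endomorphism of $B_\bullet$ with $\partial\sigma_i=\sigma_{i+1}$, $\partial a_i=a_{i+1}$. The operations are $\beta*\gamma=\beta\cdot\partial\gamma\cdot\sigma_1\cdot\partial\beta^{-1}$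 and $\beta\circ\gamma=\beta\cdot\partial\gamma\cdot a_1$. *)

theory Defs
  imports Main
begin

text \<open>Generators, 0-based: S i stands for sigma_(i+1), A i stands for a_(i+1).
  All defining relations are invariant under this index shift.\<close>

datatype gen = S nat | A nat

type_synonym word = "(gen \<times> bool) list"  (* (g, True) = g, (g, False) = g^-1 *)

definition pos :: "gen \<Rightarrow> gen \<times> bool" where "pos g = (g, True)"

inductive brel :: "word \<Rightarrow> word \<Rightarrow> bool" where
  r1: "j \<ge> i + 2 \<Longrightarrow> brel [pos (S j), pos (S i)] [pos (S i), pos (S j)]"
| r2: "j \<ge> i + 2 \<Longrightarrow> brel [pos (A j), pos (S i)] [pos (S i), pos (A j)]"
| r3: "j + 1 \<le> i \<Longrightarrow> brel [pos (A j), pos (S i)] [pos (S (Suc i)), pos (A j)]"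
| r4: "j + 1 \<le> i \<Longrightarrow> brel [pos (A j), pos (A i)] [pos (A (Suc i)), pos (A j)]"
| r5: "brel [pos (S (Suc i)), pos (S i), pos (S (Suc i))] [pos (S i), pos (S (Suc i)), pos (S i)]"
| r6: "brel [pos (S i), pos (S (Suc i)), pos (A i)] [pos (A (Suc i)), pos (S i)]"
| r7: "brel [pos (S (Suc i)), pos (S i), pos (A (Suc i))] [pos (A i), pos (S i)]"

inductive beqv :: "word \<Rightarrow> word \<Rightarrow> bool" where
  refl: "beqv u u"
| sym: "beqv u v \<Longrightarrow> beqv v u"
| trans: "beqv u v \<Longrightarrow> beqv v w \<Longrightarrow> beqv u w"
| cong: "beqv u u' \<Longrightarrow> beqv v v' \<Longrightarrow> beqv (u @ v) (u' @ v')"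
| cancel: "beqv [(g, b), (g, \<not> b)] []"
| rel: "brel u v \<Longrightarrow> beqv u v"

lemma beqv_equivp: "equivp beqv"
  by (rule equivpI; auto simp: reflp_def symp_def transp_def intro: beqv.intros)

quotient_type B = word / beqv
  by (rule beqv_equivp)

lift_definition bone :: B is "[]" .

lift_definition bmul :: "B \<Rightarrow> B \<Rightarrow> B" is "(@)"
  by (rule beqv.cong)

definition binv :: "B \<Rightarrow> B" where
  "binv x = (SOME y. bmul x y = bone \<and> bmul y x = bone)"

lift_definition bsig1 :: B is "[pos (S 0)]" .
lift_definition ba1 :: B is "[pos (A 0)]" .

fun shg :: "gen \<Rightarrow> gen" where
  "shg (S i) = S (Suc i)" | "shg (A i) = A (Suc i)"

definition shw :: "word \<Rightarrow> word" where
  "shw w = map (\<lambda>(g, b). (shg g, b)) w"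

lemma brel_shift: "brel u v \<Longrightarrow> brel (shw u) (shw v)"
  by (induction rule: brel.induct) (auto simp: shw_def pos_def intro: brel.intros[unfolded pos_def])

lemma beqv_shift: "beqv u v \<Longrightarrow> beqv (shw u) (shw v)"
proof (induction rule: beqv.induct)
  case (cong u u' v v') then show ?case by (simp add: shw_def beqv.cong)
next
  case (cancel g b) then show ?case by (simp add: shw_def beqv.cancel)
qed (auto intro: beqv.intros brel_shift)

lift_definition bdel :: "B \<Rightarrow> B" is shw
  by (rule beqv_shift)

definition bstar :: "B \<Rightarrow> B \<Rightarrow> B" where
  "bstar b c = bmul (bmul (bmul b (bdel c)) bsig1) (bdel (binv b))"

definition bcirc :: "B \<Rightarrow> B \<Rightarrow> B" where
  "bcirc b c = bmul (bmul b (bdel c)) ba1"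

definition bprod :: "B list \<Rightarrow> B" where
  "bprod xs = foldr bmul xs bone"

datatype tm = X | Star tm tm | Circ tm tm

fun is_star :: "tm \<Rightarrow> bool" where
  "is_star X = True"
| "is_star (Star a b) = (is_star a \<and> is_star b)"
| "is_star (Circ a b) = False"

fun is_circ :: "tm \<Rightarrow> bool" where
  "is_circ X = True"
| "is_circ (Circ a b) = (is_circ a \<and> is_circ b)"
| "is_circ (Star a b) = False"

fun tsize :: "tm \<Rightarrow> nat" where
  "tsize X = 1"
| "tsize (Star a b) = tsize a + tsize b"
| "tsize (Circ a b) = tsize a + tsize b"

fun subst :: "tm \<Rightarrow> tm list \<Rightarrow> tm" where
  "subst X ts = hd ts"
| "subst (Star a b) ts = Star (subst a (take (tsize a) ts)) (subst b (drop (tsize a) ts))"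
| "subst (Circ a b) ts = Circ (subst a (take (tsize a) ts)) (subst b (drop (tsize a) ts))"

fun teval :: "tm \<Rightarrow> B \<Rightarrow> B" where
  "teval X g = g"
| "teval (Star a b) g = bstar (teval a g) (teval b g)"
| "teval (Circ a b) g = bcirc (teval a g) (teval b g)"

end

theory Submission
  imports Defs
begin

text \<open>The relations \<open>a\<^sub>1\<sigma>\<^sub>i = \<sigma>\<^sub>i\<^sub>+\<^sub>1a\<^sub>1\<close> and \<open>a\<^sub>1a\<^sub>i = a\<^sub>i\<^sub>+\<^sub>1a\<^sub>1\<close> (\<open>i \<ge> 2\<close>)
  say that \<open>a\<^sub>1 \<partial>x = \<partial>\<^sup>2x a\<^sub>1\<close> for every \<open>x\<close>. Since \<open>\<beta> \<circ> \<gamma> = \<beta> \<partial>\<gamma> a\<^sub>1\<close>, induction on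
  a \<open>\<circ>\<close>-term \<open>v\<close> gives \<open>v(1) \<partial>x = \<partial>\<^sup>p x v(1)\<close> with \<open>p\<close> the size of \<open>v\<close>. Evaluating
  \<open>v[t\<^sub>1,\<dots>,t\<^sub>p]\<close> recursively and moving each \<open>v(1)\<close>-factor to the right past the
  shifted values of the later \<open>t\<^sub>i\<close> yields the formula.\<close>

lemma bmul_assoc: "bmul (bmul x y) z = bmul x (bmul y z)"
  by transfer (simp add: beqv.refl)

lemma bmul_bone_left [simp]: "bmul bone x = x"
  by transfer (simp add: beqv.refl)

lemma bmul_bone_right [simp]: "bmul x bone = x"
  by transfer (simp add: beqv.refl)

lemma bdel_bmul: "bdel (bmul x y) = bmul (bdel x) (bdel y)"
  by transfer (simp add: shw_def beqv.refl)

lemma bdel_bone [simp]: "bdel bone = bone"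
  by transfer (simp add: shw_def beqv.refl)

lemma bdel_bprod: "bdel (bprod xs) = bprod (map bdel xs)"
  by (induction xs) (simp_all add: bprod_def bdel_bmul)

fun shifted_prod :: "B list \<Rightarrow> B" where
  "shifted_prod [] = bone"
| "shifted_prod (x # xs) = bmul x (bdel (shifted_prod xs))"

lemma shifted_prod_append:
  "shifted_prod (xs @ ys) = bmul (shifted_prod xs) ((bdel ^^ length xs) (shifted_prod ys))"
  by (induction xs) (simp_all add: bdel_bmul bmul_assoc)

lemma shifted_prod_conv_bprod:
  "shifted_prod xs = bprod (map (\<lambda>i. (bdel ^^ i) (xs ! i)) [0..<length xs])"
proof (induction xs)
  case Nil
  show ?case by (simp add: bprod_def)
next
  case (Cons x xs)
  have "[0..<length (x # xs)] = 0 # map Suc [0..<length xs]"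
    by (simp del: upt_Suc add: map_Suc_upt upt_conv_Cons)
  then show ?case
    using Cons.IH by (simp add: bprod_def bdel_bprod[unfolded bprod_def] comp_def)
qed

lemma beqv_in_context: "beqv u v \<Longrightarrow> beqv (w @ u @ z) (w @ v @ z)"
  by (intro beqv.cong beqv.refl)

declare beqv.trans [trans]

lemma beqv_commute_inverse:
  assumes "beqv [a, (g, True)] [(h, True), a]"
  shows "beqv [a, (g, False)] [(h, False), a]"
proof (rule beqv.sym)
  have "beqv [(h, False), a] ([(h, False), a] @ [(g, True), (g, False)] @ [])"
    using beqv_in_context[OF beqv.sym[OF beqv.cancel[of g True]], of "[(h, False), a]" "[]"]
    by simp
  also have "beqv \<dots> ([(h, False)] @ [(h, True), a] @ [(g, False)])"
    using beqv_in_context[OF assms, of "[(h, False)]" "[(g, False)]"] by simp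
  also have "beqv \<dots> ([] @ [] @ [a, (g, False)])"
    using beqv_in_context[OF beqv.cancel[of h False], of "[]" "[a, (g, False)]"] by simp
  finally show "beqv [(h, False), a] [a, (g, False)]" by simp
qed

lemma beqv_a1_commute_letter:
  "beqv [(A 0, True), (shg g, b)] [(shg (shg g), b), (A 0, True)]"
proof -
  have pos: "beqv [(A 0, True), (shg g, True)] [(shg (shg g), True), (A 0, True)]"
  proof (cases g)
    case (S i)
    have "brel [pos (A 0), pos (S (Suc i))] [pos (S (Suc (Suc i))), pos (A 0)]"
      by (rule brel.r3) simp
    then show ?thesis using S by (simp add: pos_def beqv.rel)
  next
    case (A i)
    have "brel [pos (A 0), pos (A (Suc i))] [pos (A (Suc (Suc i))), pos (A 0)]"
      by (rule brel.r4) simp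
    then show ?thesis using A by (simp add: pos_def beqv.rel)
  qed
  then show ?thesis
    by (cases b) (simp_all add: beqv_commute_inverse)
qed

lemma beqv_a1_commute_word: "beqv ((A 0, True) # shw w) (shw (shw w) @ [(A 0, True)])"
proof (induction w)
  case Nil
  show ?case by (simp add: shw_def beqv.refl)
next
  case (Cons l w)
  obtain g b where l: "l = (g, b)" by fastforce
  have "beqv ((A 0, True) # shw (l # w)) ([] @ [(A 0, True), (shg g, b)] @ shw w)"
    by (simp add: l shw_def beqv.refl)
  also have "beqv \<dots> ([(shg (shg g), b)] @ ((A 0, True) # shw w) @ [])"
    using beqv_in_context[OF beqv_a1_commute_letter, where w = "[]" and z = "shw w"] by simp
  also have "beqv \<dots> ([(shg (shg g), b)] @ (shw (shw w) @ [(A 0, True)]) @ [])"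
    by (rule beqv_in_context[OF Cons.IH])
  finally show ?case by (simp add: l shw_def)
qed

lemma ba1_bdel_commute: "bmul ba1 (bdel x) = bmul (bdel (bdel x)) ba1"
  by transfer (simp add: pos_def beqv_a1_commute_word)

lemma teval_circ_bone_commute:
  "is_circ v \<Longrightarrow> bmul (teval v bone) (bdel x) = bmul ((bdel ^^ tsize v) x) (teval v bone)"
proof (induction v arbitrary: x)
  case X
  show ?case by simp
next
  case (Star c d)
  then show ?case by simp
next
  case (Circ c d)
  let ?c = "teval c bone" and ?d = "teval d bone"
  have c: "is_circ c" and d: "is_circ d" using Circ.prems by simp_all
  have "bmul (teval (Circ c d) bone) (bdel x) = bmul (bmul ?c (bdel (bmul ?d (bdel x)))) ba1"
    by (simp add: bcirc_def bmul_assoc bdel_bmul ba1_bdel_commute)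
  also have "\<dots> = bmul (bmul (bmul ?c (bdel ((bdel ^^ tsize d) x))) (bdel ?d)) ba1"
    unfolding Circ.IH(2)[OF d] by (simp add: bdel_bmul bmul_assoc)
  also have "\<dots> = bmul (bmul (bmul ((bdel ^^ tsize c) ((bdel ^^ tsize d) x)) ?c) (bdel ?d)) ba1"
    unfolding Circ.IH(1)[OF c] ..
  also have "\<dots> = bmul ((bdel ^^ tsize (Circ c d)) x) (teval (Circ c d) bone)"
    by (simp add: bcirc_def bmul_assoc funpow_add)
  finally show ?case .
qed

lemma teval_subst_circ:
  "is_circ v \<Longrightarrow> length ts = tsize v \<Longrightarrow>
    teval (subst v ts) \<gamma> = bmul (shifted_prod (map (\<lambda>t. teval t \<gamma>) ts)) (teval v bone)"
proof (induction v arbitrary: ts)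
  case X
  then obtain t where "ts = [t]" by (cases ts) auto
  then show ?case by simp
next
  case (Star c d)
  then show ?case by simp
next
  case (Circ c d)
  let ?c = "teval c bone" and ?d = "teval d bone"
  have c: "is_circ c" using Circ.prems by simp
  define L where "L = shifted_prod (map (\<lambda>t. teval t \<gamma>) (take (tsize c) ts))"
  define R where "R = shifted_prod (map (\<lambda>t. teval t \<gamma>) (drop (tsize c) ts))"
  have IH: "teval (subst c (take (tsize c) ts)) \<gamma> = bmul L ?c"
    "teval (subst d (drop (tsize c) ts)) \<gamma> = bmul R ?d"
    using Circ by (simp_all add: L_def R_def)
  have "shifted_prod (map (\<lambda>t. teval t \<gamma>) ts) =
      shifted_prod (map (\<lambda>t. teval t \<gamma>) (take (tsize c) ts) @ map (\<lambda>t. teval t \<gamma>) (drop (tsize c) ts))"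
    by (simp flip: map_append)
  also have "\<dots> = bmul L ((bdel ^^ tsize c) R)"
    unfolding shifted_prod_append using Circ.prems(2) by (simp add: L_def R_def)
  finally have split: "shifted_prod (map (\<lambda>t. teval t \<gamma>) ts) = bmul L ((bdel ^^ tsize c) R)" .
  have "teval (subst (Circ c d) ts) \<gamma> = bmul L (bmul (bmul ?c (bdel R)) (bmul (bdel ?d) ba1))"
    by (simp add: IH bcirc_def bdel_bmul bmul_assoc)
  also have "\<dots> = bmul (bmul L ((bdel ^^ tsize c) R)) (teval (Circ c d) bone)"
    unfolding teval_circ_bone_commute[OF c, of R]
    by (simp add: bcirc_def bmul_assoc)
  finally show ?case by (simp only: split)
qed

theorem lemma2p8:
  fixes v :: tm and ts :: "tm list" and \<gamma> :: B
  assumes "is_circ v"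
    and "length ts = tsize v"
    and "\<forall>s \<in> set ts. is_star s"
  shows "teval (subst v ts) \<gamma> =
           bmul (bprod (map (\<lambda>i. (bdel ^^ i) (teval (ts ! i) \<gamma>)) [0..<tsize v])) (teval v bone)"
proof -
  have "shifted_prod (map (\<lambda>t. teval t \<gamma>) ts)
      = bprod (map (\<lambda>i. (bdel ^^ i) (teval (ts ! i) \<gamma>)) [0..<tsize v])"
    unfolding shifted_prod_conv_bprod using assms(2) by (auto intro!: arg_cong[where f = bprod])
  then show ?thesis
    using teval_subst_circ[OF assms(1,2)] by simp
qed

end
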